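(* Let $d\ge1$, $T\ge1$, $\tau\in\{1,\dots,T\}$, learning rates $\eta_t>0$ and batch sizes $n_t\ge1$ with $n_\tau\ge2$. Let $\mu_g:\mathbb{R}^d\to\mathbb{R}^d$ and $\Sigma_g:\mathbb{R}^d\to\mathbb{R}^{d\times d}$ with $\Sigma_g(\theta)$ positive definite for all $\theta$, and let $\ell(\theta;x)$ be a differentiable loss and $z^*$ a fixed target data point. Consider two probability models for a parameter trajectory $(\theta_0,\theta_1,\dots,\theta_T)$ in $\mathbb{R}^d$, in both of which $\theta_0$ has the same distribution and the trajectory is a Markov chain: under $\mathbf{H_0}$, for every $t$, \[ \theta_t\mid\theta_{t-1}\sim\mathcal{N}\Big(\theta_{t-1}-\eta_t\mu_g(\theta_{t-1}),\ \tfrac{\eta_t^2\Sigma_g(\theta_{t-1})}{n_t}\Big); \] under $\mathbf{H_1^\tau}$ the same transition holds for $t\neq\tau$, while \[ \theta_\tau\mid\theta_{\tau-1}\sim\mathcal{N}\Big(\theta_{\tau-1}-\eta_\tau\frac{(n_\tau-1)\mu_g(\theta_{\tau-1})+\nabla_\theta\ell(\theta_{\tau-1};z^* )}{n_\tau},\ \frac{\eta_\tau^2(n_\tau-1)\Sigma_g(\theta_{\tau-1})}{n_\tau^2}\Big). \] Let $\mu_g=\mu_g(\theta_{\tau-1})$, $\Sigma_g=\Sigma_g(\theta_{\tau-1})$, $\delta_g=\nabla_\theta\ell(\theta_{\tau-1};z^* )-\mu_g$, $N=\theta_\tau-\theta_{\tau-1}+\eta_\tau\mu_g$ and $m^*=\delta_g^\top\Sigma_g^{-1}\delta_g$.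 Then the log of the ratio of the joint density of $(\theta_0,\dots,\theta_T)$ under $\mathbf{H_1^\tau}$ to that under $\mathbf{H_0}$ is \[ \log\mathrm{LR}=-\frac d2\log\Big(\frac{n_\tau-1}{n_\tau}\Big)-\frac{n_\tau}{2(n_\tau-1)\eta_\tau^2}N^\top\Sigma_g^{-1}N-\frac{n_\tau}{(n_\tau-1)\eta_\tau}N^\top\Sigma_g^{-1}\delta_g-\frac{m^*}{2(n_\tau-1)}. \]
   Context: This models (stochastic) gradient descent $\theta_t=\theta_{t-1}-\eta_tg_t$ where the batch gradient $g_t$ on $n_t$ points is assumed Gaussian with mean $\mu_g(\theta_{t-1})$ and covariance $\Sigma_g(\theta_{t-1})/n_t$ given $\theta_{t-1}$; under $\mathbf{H_1^\tau}$ one point of batch $\tau$ is replaced by the target $z^*$. *)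

theory Defs
  imports "HOL-Analysis.Analysis"
begin

definition pos_def_mat :: "real^'d^'d \<Rightarrow> bool" where
  "pos_def_mat S \<longleftrightarrow> transpose S = S \<and> (\<forall>x::real^'d. x \<noteq> 0 \<longrightarrow> x \<bullet> (S *v x) > 0)"

definition mvn_density :: "real^'d \<Rightarrow> real^'d^'d \<Rightarrow> real^'d \<Rightarrow> real" where
  "mvn_density m S x =
     exp (- (1/2) * ((x - m) \<bullet> (matrix_inv S *v (x - m))))
     / sqrt ((2 * pi) ^ CARD('d) * det S)"

definition mean_H0 :: "(nat \<Rightarrow> real) \<Rightarrow> (real^'d \<Rightarrow> real^'d) \<Rightarrow> nat \<Rightarrow> real^'d \<Rightarrow> real^'d" where
  "mean_H0 eta mu t th = th - eta t *\<^sub>R mu th"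

definition cov_H0 :: "(nat \<Rightarrow> real) \<Rightarrow> (nat \<Rightarrow> nat) \<Rightarrow> (real^'d \<Rightarrow> real^'d^'d) \<Rightarrow> nat \<Rightarrow> real^'d \<Rightarrow> real^'d^'d" where
  "cov_H0 eta n Sig t th = (eta t ^ 2 / real (n t)) *\<^sub>R Sig th"

text \<open>Transition mean / covariance at step t under H1^tau (target point in batch tau);
  grad th is the gradient of the loss at th for the target data point.\<close>
definition mean_H1 :: "nat \<Rightarrow> (nat \<Rightarrow> real) \<Rightarrow> (nat \<Rightarrow> nat) \<Rightarrow> (real^'d \<Rightarrow> real^'d) \<Rightarrow> (real^'d \<Rightarrow> real^'d)
      \<Rightarrow> nat \<Rightarrow> real^'d \<Rightarrow> real^'d" where
  "mean_H1 tau eta n mu grad t th =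
     (if t = tau then th - eta t *\<^sub>R ((1 / real (n t)) *\<^sub>R ((real (n t) - 1) *\<^sub>R mu th + grad th))
      else mean_H0 eta mu t th)"

definition cov_H1 :: "nat \<Rightarrow> (nat \<Rightarrow> real) \<Rightarrow> (nat \<Rightarrow> nat) \<Rightarrow> (real^'d \<Rightarrow> real^'d^'d) \<Rightarrow> nat \<Rightarrow> real^'d \<Rightarrow> real^'d^'d" where
  "cov_H1 tau eta n Sig t th =
     (if t = tau then (eta t ^ 2 * (real (n t) - 1) / real (n t) ^ 2) *\<^sub>R Sig th
      else cov_H0 eta n Sig t th)"

definition traj_density :: "(real^'d \<Rightarrow> real) \<Rightarrow> (nat \<Rightarrow> real^'d \<Rightarrow> real^'d) \<Rightarrow> (nat \<Rightarrow> real^'d \<Rightarrow> real^'d^'d)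
      \<Rightarrow> nat \<Rightarrow> (nat \<Rightarrow> real^'d) \<Rightarrow> real" where
  "traj_density p0 M C T th = p0 (th 0) * (\<Prod>t\<in>{1..T}. mvn_density (M t (th (t-1))) (C t (th (t-1))) (th t))"

end

theory Submission
  imports Defs
begin

text \<open>Under H0 and H1 the trajectory densities share the initial density and every transition
  except the \<open>\<tau>\<close>-th, so the likelihood ratio is the ratio of the two Gaussian densities of
  theta_tau given theta_(tau-1). Both covariances are multiples \<open>c\<^sub>0 \<Sigma>\<close> and
  \<open>c\<^sub>1 \<Sigma>\<close> of the same matrix, with \<open>c\<^sub>0 = \<eta>\<^sup>2/n\<close> and
  \<open>c\<^sub>1 = \<eta>\<^sup>2(n-1)/n\<^sup>2\<close>, so the normalising constants contribute
  \<open>(c\<^sub>0/c\<^sub>1)\<^sup>d\<^sup>/\<^sup>2\<close>. The residual is \<open>N\<close> under H0 and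
  \<open>N + (\<eta>/n) \<delta>\<^sub>g\<close> under H1; expanding the quadratic form of the latter
  and comparing it with that of \<open>N\<close> gives the remaining three terms.\<close>

lemma det_scaleR: "det (c *\<^sub>R (A::real^'n^'n)) = c ^ CARD('n) * det A"
proof -
  have "c *\<^sub>R A = (\<chi> i. c *s A $ i)"
    by vector
  then show ?thesis
    using det_rows_mul[of "\<lambda>_. c" "\<lambda>i. A $ i"] by simp
qed

lemma
  fixes A :: "real^'n^'n"
  assumes "invertible A"
  shows matrix_inv_right: "A ** matrix_inv A = mat 1"
    and matrix_inv_left: "matrix_inv A ** A = mat 1"
  using someI_ex[OF assms[unfolded invertible_def]] unfolding matrix_inv_def by auto

lemma matrix_inv_unique:
  fixes A B :: "real^'n^'n"
  assumes "A ** B = mat 1"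
  shows "matrix_inv A = B"
proof -
  have "B ** A = mat 1"
    using assms matrix_left_right_inverse by blast
  moreover have "invertible A"
    using assms invertible_right_inverse by blast
  ultimately have "matrix_inv A = B ** (A ** matrix_inv A)"
    by (metis matrix_mul_assoc matrix_mul_lid)
  also have "\<dots> = B"
    using \<open>invertible A\<close> by (simp add: matrix_inv_right)
  finally show ?thesis .
qed

lemma matrix_inv_scaleR:
  fixes A :: "real^'n^'n"
  assumes "invertible A" "c \<noteq> 0"
  shows "matrix_inv (c *\<^sub>R A) = inverse c *\<^sub>R matrix_inv A"
  using matrix_inv_right[OF assms(1)] assms(2)
  by (intro matrix_inv_unique) (simp add: matrix_scalar_ac)

lemma symmetric_matrix_inv:
  fixes A :: "real^'n^'n"
  assumes "invertible A" "transpose A = A"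
  shows "transpose (matrix_inv A) = matrix_inv A"
proof -
  have "A ** transpose (matrix_inv A) = mat 1"
    using arg_cong[OF matrix_inv_left[OF assms(1)], of transpose] assms(2)
    by (simp add: matrix_transpose_mul)
  then show ?thesis
    by (metis matrix_inv_unique)
qed

lemma symmetric_inner_matrix_commute:
  fixes M :: "real^'n^'n"
  assumes "transpose M = M"
  shows "x \<bullet> (M *v y) = y \<bullet> (M *v x)"
  by (metis assms dot_lmul_matrix inner_commute transpose_matrix_vector)

lemma symmetric_quadratic_form_add_scaleR:
  fixes M :: "real^'n^'n"
  assumes "transpose M = M"
  shows "(u + k *\<^sub>R v) \<bullet> (M *v (u + k *\<^sub>R v))
         = u \<bullet> (M *v u) + 2 * k * (u \<bullet> (M *v v)) + k\<^sup>2 * (v \<bullet> (M *v v))"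
  using symmetric_inner_matrix_commute[OF assms, of v u]
  by (simp add: matrix_vector_right_distrib matrix_vector_mult_scaleR inner_add_left
      inner_add_right algebra_simps power2_eq_square)

lemma pos_def_mat_invertible:
  assumes "pos_def_mat (S::real^'n^'n)"
  shows "invertible S"
proof -
  have "\<forall>x. S *v x = 0 \<longrightarrow> x = 0"
    using assms unfolding pos_def_mat_def by (metis inner_zero_right less_irrefl)
  then show ?thesis
    using matrix_left_invertible_ker invertible_left_inverse by blast
qed

lemma mvn_density_nonzero:
  assumes "det S \<noteq> 0"
  shows "mvn_density m S x \<noteq> 0"
  using assms unfolding mvn_density_def by simp

lemma mvn_density_scaleR:
  fixes S :: "real^'n^'n"
  assumes "invertible S" "c > 0"
  shows "mvn_density m (c *\<^sub>R S) x
         = exp (- ((x - m) \<bullet> (matrix_inv S *v (x - m))) / (2 * c))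
           / (sqrt (c ^ CARD('n)) * sqrt ((2 * pi) ^ CARD('n) * det S))"
  using assms
  by (simp add: mvn_density_def det_scaleR matrix_inv_scaleR real_sqrt_mult
      scaleR_matrix_vector_assoc[symmetric] field_simps)

lemma ln_mvn_density_scaleR_ratio:
  fixes S :: "real^'n^'n"
  assumes "invertible S" "c0 > 0" "c1 > 0"
  shows "ln (mvn_density m1 (c1 *\<^sub>R S) x / mvn_density m0 (c0 *\<^sub>R S) x)
         = real CARD('n) / 2 * ln (c0 / c1)
           + (x - m0) \<bullet> (matrix_inv S *v (x - m0)) / (2 * c0)
           - (x - m1) \<bullet> (matrix_inv S *v (x - m1)) / (2 * c1)"
proof -
  define D where "D = sqrt ((2 * pi) ^ CARD('n) * det S)"
  define Q where "Q v = v \<bullet> (matrix_inv S *v v)" for v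
  have "D \<noteq> 0"
    using invertible_det_nz[of S] assms(1) unfolding D_def by simp
  have ln_sqrt_pow: "ln (sqrt (c ^ CARD('n))) = real CARD('n) / 2 * ln c" if "c > 0" for c :: real
    using that by (simp add: ln_sqrt ln_realpow)
  have exp_ratio: "exp (- b / k1) / (s1 * D) / (exp (- a / k0) / (s0 * D))
      = exp (a / k0 - b / k1) * (s0 / s1)" for a b k0 k1 s0 s1 :: real
    using \<open>D \<noteq> 0\<close> by (simp add: exp_diff exp_minus divide_inverse)
  have "mvn_density m1 (c1 *\<^sub>R S) x / mvn_density m0 (c0 *\<^sub>R S) x
        = exp (Q (x - m0) / (2 * c0) - Q (x - m1) / (2 * c1))
          * (sqrt (c0 ^ CARD('n)) / sqrt (c1 ^ CARD('n)))"
    unfolding mvn_density_scaleR[OF assms(1,2)] mvn_density_scaleR[OF assms(1,3)]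
      D_def[symmetric] Q_def[symmetric]
    by (rule exp_ratio)
  also have "ln \<dots> = Q (x - m0) / (2 * c0) - Q (x - m1) / (2 * c1)
      + (ln (sqrt (c0 ^ CARD('n))) - ln (sqrt (c1 ^ CARD('n))))"
    using assms(2,3) by (simp add: ln_mult ln_div)
  also have "\<dots> = real CARD('n) / 2 * ln (c0 / c1) + Q (x - m0) / (2 * c0) - Q (x - m1) / (2 * c1)"
    using assms(2,3) by (simp add: ln_sqrt_pow ln_div right_diff_distrib)
  finally show ?thesis
    unfolding Q_def .
qed

lemma traj_density_ratio_single_transition:
  assumes "tau \<in> {1..T}" "p0 (th 0) \<noteq> 0"
    and "\<And>t. t \<in> {1..T} - {tau} \<Longrightarrow> M1 t = M0 t"
    and "\<And>t. t \<in> {1..T} - {tau} \<Longrightarrow> C1 t = C0 t"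
    and "\<And>t. t \<in> {1..T} - {tau} \<Longrightarrow> det (C0 t (th (t - 1))) \<noteq> 0"
  shows "traj_density p0 M1 C1 T th / traj_density p0 M0 C0 T th
         = mvn_density (M1 tau (th (tau - 1))) (C1 tau (th (tau - 1))) (th tau)
           / mvn_density (M0 tau (th (tau - 1))) (C0 tau (th (tau - 1))) (th tau)"
proof -
  define f where "f M C t = mvn_density (M t (th (t - 1))) (C t (th (t - 1))) (th t)" for M C t
  have split: "traj_density p0 M C T th = p0 (th 0) * f M C tau * (\<Prod>t\<in>{1..T} - {tau}. f M C t)"
    for M C
    unfolding traj_density_def f_def[symmetric]
    using prod.remove[OF _ assms(1), of "f M C"] by simp
  have "(\<Prod>t\<in>{1..T} - {tau}. f M1 C1 t) = (\<Prod>t\<in>{1..T} - {tau}. f M0 C0 t)"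
    using assms(3,4) by (intro prod.cong) (simp_all add: f_def)
  moreover have "(\<Prod>t\<in>{1..T} - {tau}. f M0 C0 t) \<noteq> 0"
    using assms(5) by (simp add: f_def mvn_density_nonzero)
  ultimately show ?thesis
    unfolding split using assms(2) by (simp add: f_def)
qed

lemma residual_mean_H1:
  assumes "n tau \<noteq> 0"
  shows "x - mean_H1 tau eta n mu grad tau a
         = (x - mean_H0 eta mu tau a) + (eta tau / real (n tau)) *\<^sub>R (grad a - mu a)"
  using assms by (simp add: mean_H1_def mean_H0_def vec_eq_iff field_simps)

lemma gaussian_log_ratio_coefficients:
  fixes nt et d q r m :: real
  assumes "nt > 1" "et > 0"
  shows "d / 2 * ln ((et\<^sup>2 / nt) / (et\<^sup>2 * (nt - 1) / nt\<^sup>2))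
         + q / (2 * (et\<^sup>2 / nt))
         - (q + 2 * (et / nt) * r + (et / nt)\<^sup>2 * m) / (2 * (et\<^sup>2 * (nt - 1) / nt\<^sup>2))
         = - (d / 2) * ln ((nt - 1) / nt)
           - nt / (2 * (nt - 1) * et\<^sup>2) * q
           - nt / ((nt - 1) * et) * r
           - m / (2 * (nt - 1))"
proof -
  define c0 c1 k where "c0 = et\<^sup>2 / nt" and "c1 = et\<^sup>2 * (nt - 1) / nt\<^sup>2" and "k = et / nt"
  have "nt \<noteq> 0" "nt - 1 \<noteq> 0" "et \<noteq> 0"
    using assms by auto
  then have "c0 / c1 = nt / (nt - 1)"
    and "q / (2 * c0) - q / (2 * c1) = - nt / (2 * (nt - 1) * et\<^sup>2) * q"
    and "2 * k * r / (2 * c1) = nt / ((nt - 1) * et) * r"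
    and "k\<^sup>2 * m / (2 * c1) = m / (2 * (nt - 1))"
    unfolding c0_def c1_def k_def by (simp_all add: field_simps power2_eq_square)
  moreover have "ln (nt / (nt - 1)) = - ln ((nt - 1) / nt)"
    using assms by (simp add: ln_div)
  moreover have "(q + 2 * k * r + k\<^sup>2 * m) / (2 * c1)
      = q / (2 * c1) + 2 * k * r / (2 * c1) + k\<^sup>2 * m / (2 * c1)"
    by (simp add: add_divide_distrib)
  ultimately show ?thesis
    unfolding c0_def[symmetric] c1_def[symmetric] k_def[symmetric] by simp
qed

lemma ln_transition_density_ratio_H1_H0:
  fixes Sig :: "real^'d \<Rightarrow> real^'d^'d" and mu grad :: "real^'d \<Rightarrow> real^'d"
    and eta :: "nat \<Rightarrow> real" and n :: "nat \<Rightarrow> nat" and a x :: "real^'d"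
  assumes "pos_def_mat (Sig a)" "n tau \<ge> 2" "eta tau > 0"
  defines "Si \<equiv> matrix_inv (Sig a)" and "dg \<equiv> grad a - mu a"
    and "N \<equiv> x - a + eta tau *\<^sub>R mu a" and "nt \<equiv> real (n tau)" and "et \<equiv> eta tau"
  shows "ln (mvn_density (mean_H1 tau eta n mu grad tau a) (cov_H1 tau eta n Sig tau a) x
             / mvn_density (mean_H0 eta mu tau a) (cov_H0 eta n Sig tau a) x)
         = - (real CARD('d) / 2) * ln ((nt - 1) / nt)
           - nt / (2 * (nt - 1) * et\<^sup>2) * (N \<bullet> (Si *v N))
           - nt / ((nt - 1) * et) * (N \<bullet> (Si *v dg))
           - dg \<bullet> (Si *v dg) / (2 * (nt - 1))"
proof -
  have nt: "nt > 1" and et: "et > 0"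
    using assms(2,3) unfolding nt_def et_def by simp_all
  then have "et\<^sup>2 / nt > 0" "et\<^sup>2 * (nt - 1) / nt\<^sup>2 > 0"
    by simp_all
  note log_ratio = ln_mvn_density_scaleR_ratio[OF pos_def_mat_invertible[OF assms(1)] this,
      folded Si_def]
  have symmetric_Si: "transpose Si = Si"
    using assms(1) pos_def_mat_invertible[OF assms(1)] symmetric_matrix_inv
    unfolding Si_def pos_def_mat_def by blast
  have covariances: "cov_H1 tau eta n Sig tau a = (et\<^sup>2 * (nt - 1) / nt\<^sup>2) *\<^sub>R Sig a"
    "cov_H0 eta n Sig tau a = (et\<^sup>2 / nt) *\<^sub>R Sig a"
    by (simp_all add: cov_H1_def cov_H0_def nt_def et_def)
  have residual_H0: "x - mean_H0 eta mu tau a = N"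
    by (simp add: mean_H0_def N_def)
  have residual_H1: "x - mean_H1 tau eta n mu grad tau a = N + (et / nt) *\<^sub>R dg"
    using nt by (simp add: residual_mean_H1 residual_H0 nt_def et_def dg_def)
  have "ln (mvn_density (mean_H1 tau eta n mu grad tau a) (cov_H1 tau eta n Sig tau a) x
            / mvn_density (mean_H0 eta mu tau a) (cov_H0 eta n Sig tau a) x)
      = real CARD('d) / 2 * ln ((et\<^sup>2 / nt) / (et\<^sup>2 * (nt - 1) / nt\<^sup>2))
        + N \<bullet> (Si *v N) / (2 * (et\<^sup>2 / nt))
        - (N \<bullet> (Si *v N) + 2 * (et / nt) * (N \<bullet> (Si *v dg)) + (et / nt)\<^sup>2 * (dg \<bullet> (Si *v dg)))
          / (2 * (et\<^sup>2 * (nt - 1) / nt\<^sup>2))"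
    unfolding covariances log_ratio
      residual_H0 residual_H1 symmetric_quadratic_form_add_scaleR[OF symmetric_Si] ..
  also have "\<dots> = - (real CARD('d) / 2) * ln ((nt - 1) / nt)
      - nt / (2 * (nt - 1) * et\<^sup>2) * (N \<bullet> (Si *v N))
      - nt / ((nt - 1) * et) * (N \<bullet> (Si *v dg))
      - dg \<bullet> (Si *v dg) / (2 * (nt - 1))"
    using nt et by (rule gaussian_log_ratio_coefficients)
  finally show ?thesis .
qed

theorem theorem4p1:
  fixes T tau :: nat
    and eta :: "nat \<Rightarrow> real" and n :: "nat \<Rightarrow> nat"
    and mu :: "real^'d \<Rightarrow> real^'d" and Sig :: "real^'d \<Rightarrow> real^'d^'d"
    and loss :: "real^'d \<Rightarrow> 'x \<Rightarrow> real" and zstar :: 'x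
    and grad :: "real^'d \<Rightarrow> real^'d"
    and p0 :: "real^'d \<Rightarrow> real"
    and th :: "nat \<Rightarrow> real^'d"
  assumes "T \<ge> 1" and "1 \<le> tau" and "tau \<le> T"
    and "\<And>t. t \<in> {1..T} \<Longrightarrow> eta t > 0"
    and "\<And>t. t \<in> {1..T} \<Longrightarrow> n t \<ge> 1"
    and "n tau \<ge> 2"
    and "\<And>x. pos_def_mat (Sig x)"
    and "\<And>x. ((\<lambda>y. loss y zstar) has_derivative (\<lambda>h. grad x \<bullet> h)) (at x)"
    and "p0 (th 0) > 0"
  shows
    "let muG = mu (th (tau - 1)); SigG = Sig (th (tau - 1));
         dg = grad (th (tau - 1)) - muG;
         N = th tau - th (tau - 1) + eta tau *\<^sub>R muG;
         Si = matrix_inv SigG;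
         mstar = dg \<bullet> (Si *v dg);
         nt = real (n tau); et = eta tau
     in ln (traj_density p0 (mean_H1 tau eta n mu grad) (cov_H1 tau eta n Sig) T th
            / traj_density p0 (mean_H0 eta mu) (cov_H0 eta n Sig) T th)
        = - (real CARD('d) / 2) * ln ((nt - 1) / nt)
          - nt / (2 * (nt - 1) * et ^ 2) * (N \<bullet> (Si *v N))
          - nt / ((nt - 1) * et) * (N \<bullet> (Si *v dg))
          - mstar / (2 * (nt - 1))"
proof -
  \<comment> \<open>The differentiability hypothesis only identifies \<open>grad\<close> as the gradient of the loss
    at \<open>zstar\<close>; the identity holds for any \<open>grad\<close>.\<close>
  have tau: "tau \<in> {1..T}"
    using assms(2,3) by simp
  have "det (cov_H0 eta n Sig t (th (t - 1))) \<noteq> 0" if "t \<in> {1..T}" for t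
    using assms(4,5)[OF that] invertible_det_nz[THEN iffD1, OF pos_def_mat_invertible[OF assms(7)]]
    by (simp add: cov_H0_def det_scaleR)
  then have "traj_density p0 (mean_H1 tau eta n mu grad) (cov_H1 tau eta n Sig) T th
            / traj_density p0 (mean_H0 eta mu) (cov_H0 eta n Sig) T th
      = mvn_density (mean_H1 tau eta n mu grad tau (th (tau - 1)))
          (cov_H1 tau eta n Sig tau (th (tau - 1))) (th tau)
        / mvn_density (mean_H0 eta mu tau (th (tau - 1))) (cov_H0 eta n Sig tau (th (tau - 1))) (th tau)"
    using assms(9)
    by (intro traj_density_ratio_single_transition[OF tau])
      (simp_all add: fun_eq_iff mean_H1_def cov_H1_def)
  then show ?thesis
    unfolding Let_def
    using ln_transition_density_ratio_H1_H0[where Sig = Sig and a = "th (tau - 1)" and n = n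
        and tau = tau and eta = eta and mu = mu and grad = grad and x = "th tau",
        OF assms(7) assms(6) assms(4)[OF tau]]
    by simp
qed

end
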